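(* Let $p$ be an odd prime, $H\cong\mathbb{Z}_p^5$, and $A\le\mathrm{Aut}(H)$ a $p$-group whose fixed-point subgroup $C_H(A)$ has order at least $p^2$; let $\mathcal A=V(H,A)$ and suppose $\mathcal A$ is indecomposable. Let $U,W$ be $\mathcal A$-subgroups with $W<O(\mathcal A)<U$, $|W|=p$ and $|U|=p^4$. Then $\mathcal A$ has a basic set $T$ with $T\subseteq H\setminus U$, $1<|T|\le p^2$ and $W\not\le\mathrm{rad}(T)$.
   Context: $H$ is written additively. An S-ring over $H$ is a subalgebra $\mathcal A\subseteq\mathbb{Q}H$ spanned by $\underline{T}=\sum_{t\in T}t$ for $T$ in a partition $\mathrm{Bs}(\mathcal A)$ of $H$ (basic sets) with $\{0\}\in\mathrm{Bs}(\mathcal A)$ and $-T\in\mathrm{Bs}(\mathcal A)$ for all $T$. $V(H,A)$ is the S-ring whose basic sets are the $A$-orbits on $H$. A subgroup $K$ is an $\mathcal A$-subgroup if $\underline K\in\mathcal A$; $\mathrm{rad}(S)=\{h\in H:h+S=S\}$; $O(\mathcal A)=\{h:\{h\}\in\mathrm{Bs}(\mathcal A)\}$. If $F\le E$ are $\mathcal A$-subgroups with $F\le\mathrm{rad}(T)$ for every basic set $T\subseteq H\setminus E$, $\mathcal A$ is an $E/F$-wreath product; it is indecomposable if it is not such for any $E\ne H$, $F\ne\{0\}$. *)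

theory Defs
  imports Main "HOL-Computational_Algebra.Primes"
begin

definition nsmul :: "nat \<Rightarrow> 'a::ab_group_add \<Rightarrow> 'a" where
  "nsmul n x = (((+) x) ^^ n) 0"

definition subgrp :: "'a::ab_group_add set \<Rightarrow> bool" where
  "subgrp K \<longleftrightarrow> 0 \<in> K \<and> (\<forall>x\<in>K. \<forall>y\<in>K. x + y \<in> K) \<and> (\<forall>x\<in>K. - x \<in> K)"

definition is_aut :: "('a::ab_group_add \<Rightarrow> 'a) \<Rightarrow> bool" where
  "is_aut f \<longleftrightarrow> bij f \<and> (\<forall>x y. f (x + y) = f x + f y)"

definition aut_subgroup :: "('a::ab_group_add \<Rightarrow> 'a) set \<Rightarrow> bool" where
  "aut_subgroup A \<longleftrightarrow> (\<forall>f\<in>A. is_aut f) \<and> id \<in> A \<and>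
     (\<forall>f\<in>A. \<forall>g\<in>A. f \<circ> g \<in> A) \<and> (\<forall>f\<in>A. inv f \<in> A)"

definition fixpts :: "('a \<Rightarrow> 'a) set \<Rightarrow> 'a set" where
  "fixpts A = {h. \<forall>f\<in>A. f h = h}"

(* basic sets of V(H,A): the A-orbits on H *)
definition orbitsV :: "('a \<Rightarrow> 'a) set \<Rightarrow> 'a set set" where
  "orbitsV A = {(\<lambda>f. f x) ` A | x. True}"

(* K is an S-subgroup w.r.t. the basic sets Bs, i.e. underline K lies in the span of the
   basic-set sums; since Bs is a partition this means K is a union of basic sets *)
definition S_subgroup :: "'a::ab_group_add set set \<Rightarrow> 'a set \<Rightarrow> bool" where
  "S_subgroup Bs K \<longleftrightarrow> subgrp K \<and> (\<forall>T\<in>Bs. T \<subseteq> K \<or> T \<inter> K = {})"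

definition rad :: "'a::ab_group_add set \<Rightarrow> 'a set" where
  "rad S = {h. (\<lambda>s. h + s) ` S = S}"

definition thin_part :: "'a set set \<Rightarrow> 'a set" where
  "thin_part Bs = {h. {h} \<in> Bs}"

definition wreath :: "'a::ab_group_add set set \<Rightarrow> 'a set \<Rightarrow> 'a set \<Rightarrow> bool" where
  "wreath Bs E F \<longleftrightarrow> S_subgroup Bs E \<and> S_subgroup Bs F \<and> F \<subseteq> E \<and>
     (\<forall>T\<in>Bs. T \<subseteq> UNIV - E \<longrightarrow> F \<subseteq> rad T)"

definition indecomposable :: "'a::ab_group_add set set \<Rightarrow> bool" where
  "indecomposable Bs \<longleftrightarrow> \<not> (\<exists>E F. wreath Bs E F \<and> E \<noteq> UNIV \<and> F \<noteq> {0})"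

end

theory Submission
  imports Defs "HOL-Number_Theory.Number_Theory" "HOL-Algebra.Group_Action"
begin

text \<open>Suppose the conclusion fails. Since \<open>\<A>\<close> is not a \<open>U/W\<close>-wreath product, some orbit
  \<open>T\<^sub>0 = x\<^sup>A\<close> outside \<open>U\<close> has \<open>W \<not>\<le> rad T\<^sub>0\<close>; by assumption \<open>|T\<^sub>0| > p\<^sup>2\<close>, and orbit sizes are
  powers of \<open>p\<close>, so \<open>|T\<^sub>0| \<ge> p\<^sup>3\<close>. A \<open>p\<close>-group acts trivially on \<open>H/U \<cong> \<int>\<^sub>p\<close>, so the coset
  \<open>x + U\<close> is a union of orbits. For \<open>w \<in> W\<close> outside \<open>rad T\<^sub>0\<close> the \<open>p\<close> translates \<open>i w + T\<^sub>0\<close>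
  are distinct orbits in \<open>x + U\<close> whose sizes add up to at least \<open>p\<^sup>4 = |x + U|\<close>, so they are
  all the orbits there. As \<open>|O(\<A>)| > p\<close>, two fixed points \<open>c\<^sub>1 \<noteq> c\<^sub>2\<close> translate \<open>T\<^sub>0\<close> to the
  same orbit, so \<open>d = c\<^sub>1 - c\<^sub>2\<close> lies in the radical of every orbit in \<open>x + U\<close>, and by scaling
  of every orbit outside \<open>U\<close>. Then \<open>\<A>\<close> is a \<open>U/\<langle>d\<rangle>\<close>-wreath product, a contradiction.\<close>

section \<open>Multiples in an abelian group\<close>

lemma nsmul_0 [simp]: "nsmul 0 x = 0"
  by (simp add: nsmul_def)

lemma nsmul_Suc [simp]: "nsmul (Suc n) x = x + nsmul n x"
  by (simp add: nsmul_def)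

lemma nsmul_1 [simp]: "nsmul 1 x = x"
  by (simp add: nsmul_def)

lemma nsmul_zero [simp]: "nsmul n 0 = 0"
  by (induct n) simp_all

lemma nsmul_add: "nsmul (m + n) x = nsmul m x + nsmul n x"
  by (induct m) (simp_all add: add.assoc)

lemma nsmul_mult: "nsmul (m * n) x = nsmul m (nsmul n x)"
  by (induct m) (simp_all add: nsmul_add)

lemma nsmul_add_distrib: "nsmul n (x + y) = nsmul n x + nsmul n y"
  by (induct n) (simp_all add: algebra_simps)

lemma nsmul_diff_distrib: "nsmul n (x - y) = nsmul n x - nsmul n y"
  by (induct n) (simp_all add: algebra_simps)

lemma nsmul_mod:
  assumes "nsmul p x = 0"
  shows "nsmul n x = nsmul (n mod p) x"
proof -
  have "nsmul n x = nsmul (n div p * p) x + nsmul (n mod p) x"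
    by (metis div_mult_mod_eq nsmul_add)
  then show ?thesis
    by (simp add: nsmul_mult assms)
qed

lemma nsmul_commute: "nsmul m (nsmul n x) = nsmul n (nsmul m x)"
  by (simp add: nsmul_mult[symmetric] mult.commute)

lemma nsmul_inverse_mod_prime:
  assumes "prime p" and "\<not> p dvd k" and "\<And>x::'a::ab_group_add. nsmul p x = 0"
  shows "\<exists>m. \<forall>x::'a. nsmul m (nsmul k x) = x"
proof -
  have "coprime k p"
    using prime_imp_coprime[OF assms(1,2)] by (simp add: coprime_commute)
  then obtain m where "[k * m = 1] (mod p)"
    using cong_solve_coprime_nat by auto
  then have km: "k * m mod p = 1"
    using prime_gt_1_nat[OF assms(1)] by (simp add: cong_def)
  have "nsmul (k * m) x = x" for x :: 'a
    using nsmul_mod[OF assms(3), of "k * m"] km by simp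
  then show ?thesis
    by (metis nsmul_mult mult.commute)
qed

lemma cong_pow_prime_self:
  fixes j :: nat
  assumes "prime p"
  shows "[j ^ p = j] (mod p)"
proof (cases "p dvd j")
  case True
  moreover have "j dvd j ^ p"
    using prime_gt_0_nat[OF assms] by (simp add: dvd_power)
  ultimately show ?thesis
    by (simp add: cong_def dvd_imp_mod_0 dvd_trans[of p j])
next
  case False
  have "[j * j ^ (p - 1) = j * 1] (mod p)"
    using fermat_theorem[OF assms False] by (rule cong_scalar_left)
  moreover have "j * j ^ (p - 1) = j ^ p"
    using prime_gt_0_nat[OF assms] by (metis Suc_diff_1 power_Suc)
  ultimately show ?thesis
    by simp
qed

lemma cong_pow_prime_power_self:
  fixes k :: nat
  assumes "prime p"
  shows "[k ^ p ^ n = k] (mod p)"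
proof (induct n)
  case 0
  then show ?case
    by simp
next
  case (Suc n)
  have "k ^ p ^ Suc n = (k ^ p ^ n) ^ p"
    by (simp add: power_mult[symmetric] mult.commute)
  then show ?case
    using cong_trans[OF cong_pow_prime_self[OF assms] Suc] by simp
qed

section \<open>Subgroups, radicals and cyclic subgroups\<close>

lemma subgrp_0: "subgrp K \<Longrightarrow> 0 \<in> K"
  by (simp add: subgrp_def)

lemma subgrp_add: "subgrp K \<Longrightarrow> x \<in> K \<Longrightarrow> y \<in> K \<Longrightarrow> x + y \<in> K"
  by (simp add: subgrp_def)

lemma subgrp_minus: "subgrp K \<Longrightarrow> x \<in> K \<Longrightarrow> - x \<in> K"
  by (simp add: subgrp_def)

lemma subgrp_diff: "subgrp K \<Longrightarrow> x \<in> K \<Longrightarrow> y \<in> K \<Longrightarrow> x - y \<in> K"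
  using subgrp_add[of K x "- y"] subgrp_minus[of K y] by simp

lemma subgrp_nsmul: "subgrp K \<Longrightarrow> x \<in> K \<Longrightarrow> nsmul n x \<in> K"
  by (induct n) (simp_all add: subgrp_0 subgrp_add)

lemma subgrp_nsmul_cancel:
  fixes x :: "'a::ab_group_add"
  assumes "prime p" and "\<And>x::'a. nsmul p x = 0"
    and "subgrp K" and "\<not> p dvd k" and "nsmul k x \<in> K"
  shows "x \<in> K"
proof -
  obtain m where "\<forall>z::'a. nsmul m (nsmul k z) = z"
    using nsmul_inverse_mod_prime[OF assms(1,4,2)] by blast
  then show ?thesis
    using subgrp_nsmul[OF assms(3,5), of m] by simp
qed

lemma subgrp_nsmul_diff_imp_eq:
  fixes x :: "'a::ab_group_add"
  assumes "prime p" and "\<And>x::'a. nsmul p x = 0"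
    and "subgrp K" and "x \<notin> K" and "i < p" and "j < p"
    and "nsmul i x - nsmul j x \<in> K"
  shows "i = j"
proof -
  have gap: "nsmul b x - nsmul a x \<notin> K" if "a < b" "b < p" for a b
  proof -
    have "\<not> p dvd b - a"
      using that by (intro nat_dvd_not_less) auto
    then have "nsmul (b - a) x \<notin> K"
      using subgrp_nsmul_cancel[OF assms(1-3)] assms(4) by blast
    moreover have "nsmul b x = nsmul a x + nsmul (b - a) x"
      using nsmul_add[of a "b - a" x] that(1) by simp
    ultimately show ?thesis
      by simp
  qed
  have "nsmul j x - nsmul i x \<in> K"
    using subgrp_minus[OF assms(3,7)] by simp
  then show ?thesis
    using gap[of i j] gap[of j i] assms(5-7) by (cases i j rule: linorder_cases) auto
qed

lemma index_prime_coset_rep: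
  fixes U :: "'a::{ab_group_add,finite} set"
  assumes "prime p" and "\<And>x::'a. nsmul p x = 0" and "subgrp U"
    and "p * card U = card (UNIV :: 'a set)" and "x \<notin> U"
  obtains k where "k < p" and "y - nsmul k x \<in> U"
proof -
  define C where "C k = (+) (nsmul k x) ` U" for k
  have disjoint: "C i \<inter> C j = {}" if "i < p" "j < p" "i \<noteq> j" for i j
  proof (rule ccontr)
    assume "C i \<inter> C j \<noteq> {}"
    then obtain u u' where "u \<in> U" "u' \<in> U" "nsmul i x + u = nsmul j x + u'"
      unfolding C_def by blast
    then have "nsmul i x - nsmul j x = u' - u" and "u' - u \<in> U"
      using subgrp_diff[OF assms(3)] by (auto simp: algebra_simps)
    then show False
      using subgrp_nsmul_diff_imp_eq[OF assms(1-3,5) that(1,2)] that(3) by simp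
  qed
  have card_C: "card (C k) = card U" for k
    unfolding C_def by (rule card_image) simp
  have "card (\<Union>k<p. C k) = (\<Sum>k<p. card (C k))"
    using disjoint by (intro card_UN_disjoint) simp_all
  also have "\<dots> = card (UNIV :: 'a set)"
    using assms(4) by (simp add: card_C)
  finally have "(\<Union>k<p. C k) = UNIV"
    by (intro card_subset_eq) simp_all
  then obtain k where "k < p" "y \<in> C k"
    by blast
  then show ?thesis
    using that by (auto simp: C_def)
qed

lemma rad_translate_eq:
  assumes "(+) a ` S = (+) b ` S"
  shows "a - b \<in> rad S"
proof -
  have "(+) (a - b) ` S = (+) (- b) ` ((+) a ` S)"
    by (simp add: image_image algebra_simps)
  also have "\<dots> = (+) (- b) ` ((+) b ` S)"
    by (simp only: assms)
  also have "\<dots> = S"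
    by (simp add: image_image)
  finally show ?thesis
    by (simp add: rad_def)
qed

lemma subgrp_rad: "subgrp (rad S)"
  unfolding subgrp_def
proof (intro conjI ballI)
  show "0 \<in> rad S"
    by (simp add: rad_def)
  fix a b assume a: "a \<in> rad S" and b: "b \<in> rad S"
  have "(+) (a + b) ` S = (+) a ` ((+) b ` S)"
    by (simp add: image_image add.assoc)
  also have "\<dots> = S"
    using a b by (simp only: rad_def mem_Collect_eq)
  finally show "a + b \<in> rad S"
    by (simp add: rad_def)
  have "(+) (- a) ` S = (+) (- a) ` ((+) a ` S)"
    using a by (simp only: rad_def mem_Collect_eq)
  also have "\<dots> = S"
    by (simp add: image_image)
  finally show "- a \<in> rad S"
    by (simp add: rad_def)
qed

lemma rad_image_translate [simp]: "rad ((+) c ` S) = rad S"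
proof -
  have "(+) d ` ((+) c ` S) = (+) c ` ((+) d ` S)" for d
    by (simp add: image_image algebra_simps)
  moreover have "(+) c ` X = (+) c ` Y \<longleftrightarrow> X = Y" for X Y :: "'a set"
    by (simp add: inj_image_eq_iff)
  ultimately show ?thesis
    unfolding rad_def by simp
qed

lemma nsmul_in_rad_image:
  assumes "d \<in> rad S"
  shows "nsmul k d \<in> rad (nsmul k ` S)"
proof -
  have "(+) (nsmul k d) ` nsmul k ` S = nsmul k ` (+) d ` S"
    by (simp add: image_image nsmul_add_distrib)
  also have "\<dots> = nsmul k ` S"
    using assms by (simp only: rad_def mem_Collect_eq)
  finally show ?thesis
    by (simp add: rad_def)
qed

lemma translates_nsmul_eq_imp_eq:
  fixes w :: "'a::ab_group_add"
  assumes "prime p" and "\<And>x::'a. nsmul p x = 0" and "w \<notin> rad S"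
    and "i < p" and "j < p" and "(+) (nsmul i w) ` S = (+) (nsmul j w) ` S"
  shows "i = j"
  using subgrp_nsmul_diff_imp_eq[OF assms(1,2) subgrp_rad assms(3-5) rad_translate_eq[OF assms(6)]] .

definition cyclic_subgrp :: "'a::ab_group_add \<Rightarrow> 'a set" where
  "cyclic_subgrp d = range (\<lambda>i. nsmul i d)"

lemma mem_cyclic_subgrp: "d \<in> cyclic_subgrp d"
  unfolding cyclic_subgrp_def by (metis nsmul_1 rangeI)

lemma cyclic_subgrp_subset: "subgrp K \<Longrightarrow> d \<in> K \<Longrightarrow> cyclic_subgrp d \<subseteq> K"
  by (auto simp: cyclic_subgrp_def subgrp_nsmul)

lemma subgrp_cyclic_subgrp:
  assumes "0 < n" and "nsmul n d = 0"
  shows "subgrp (cyclic_subgrp d)"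
  unfolding subgrp_def cyclic_subgrp_def
proof (intro conjI ballI)
  show "0 \<in> range (\<lambda>i. nsmul i d)"
    using nsmul_0[symmetric] by (rule range_eqI)
  fix x y assume "x \<in> range (\<lambda>i. nsmul i d)" "y \<in> range (\<lambda>i. nsmul i d)"
  then obtain i j where "x = nsmul i d" "y = nsmul j d"
    by blast
  then have "x + y = nsmul (i + j) d"
    by (simp add: nsmul_add)
  then show "x + y \<in> range (\<lambda>i. nsmul i d)"
    by (rule range_eqI)
next
  fix x assume "x \<in> range (\<lambda>i. nsmul i d)"
  then obtain i where i: "x = nsmul i d"
    by blast
  obtain n' where n: "n = Suc n'"
    using assms(1) gr0_conv_Suc by blast
  have "nsmul i d + nsmul (n' * i) d = nsmul (n * i) d"
    by (simp add: n nsmul_add)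
  also have "\<dots> = nsmul i (nsmul n d)"
    by (simp only: mult.commute[of n i] nsmul_mult)
  finally have "- x = nsmul (n' * i) d"
    using i assms(2) by (simp add: add_eq_0_iff)
  then show "- x \<in> range (\<lambda>i. nsmul i d)"
    by (rule range_eqI)
qed

lemma indecomposable_witness:
  assumes "indecomposable Bs" and "S_subgroup Bs E" and "S_subgroup Bs F"
    and "F \<subseteq> E" and "E \<noteq> UNIV" and "F \<noteq> {0}"
  obtains T where "T \<in> Bs" and "T \<subseteq> UNIV - E" and "\<not> F \<subseteq> rad T"
proof -
  have "\<not> wreath Bs E F"
    using assms(1,5,6) unfolding indecomposable_def by blast
  then show ?thesis
    using assms(2-4) that unfolding wreath_def by blast
qed

section \<open>Orbits of a group of automorphisms\<close>

definition orb :: "('a \<Rightarrow> 'a) set \<Rightarrow> 'a \<Rightarrow> 'a set" where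
  "orb A x = (\<lambda>f. f x) ` A"

lemma orbitsV_eq_range_orb: "orbitsV A = range (orb A)"
  by (auto simp: orbitsV_def orb_def)

lemma orb_in_orbitsV: "orb A x \<in> orbitsV A"
  by (simp add: orbitsV_eq_range_orb)

definition aut_grp :: "('a \<Rightarrow> 'a) set \<Rightarrow> ('a \<Rightarrow> 'a) monoid" where
  "aut_grp A = \<lparr>carrier = A, monoid.mult = (\<circ>), one = id\<rparr>"

locale aut_group =
  fixes A :: "('a::ab_group_add \<Rightarrow> 'a) set"
  assumes aut_subgroup: "aut_subgroup A"
begin

lemma additive: "f \<in> A \<Longrightarrow> f (x + y) = f x + f y"
  using aut_subgroup by (simp add: aut_subgroup_def is_aut_def)

lemma bij_mem: "f \<in> A \<Longrightarrow> bij f"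
  using aut_subgroup by (simp add: aut_subgroup_def is_aut_def)

lemma map_zero: "f \<in> A \<Longrightarrow> f 0 = 0"
  using additive[of f 0 0] by simp

lemma map_diff: "f \<in> A \<Longrightarrow> f (x - y) = f x - f y"
  using additive[of f "x - y" y] by (simp add: eq_diff_eq)

lemma map_nsmul: "f \<in> A \<Longrightarrow> f (nsmul n x) = nsmul n (f x)"
  by (induct n) (simp_all add: map_zero additive)

lemma group_aut_grp: "group (aut_grp A)"
proof (rule groupI)
  fix f assume "f \<in> carrier (aut_grp A)"
  then have f: "f \<in> A"
    by (simp add: aut_grp_def)
  have "inv_into UNIV f \<circ> f = id"
    using bij_is_inj[OF bij_mem[OF f]] by (simp add: inv_o_cancel)
  then show "\<exists>g\<in>carrier (aut_grp A). g \<otimes>\<^bsub>aut_grp A\<^esub> f = \<one>\<^bsub>aut_grp A\<^esub>"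
    using aut_subgroup f by (auto simp: aut_grp_def aut_subgroup_def)
qed (use aut_subgroup in \<open>auto simp: aut_grp_def aut_subgroup_def comp_assoc\<close>)

sublocale group_action "aut_grp A" UNIV "\<lambda>f. f"
  unfolding group_action_def group_hom_def group_hom_axioms_def
proof (intro conjI group_aut_grp group_BijGroup)
  show "(\<lambda>f. f) \<in> hom (aut_grp A) (BijGroup UNIV)"
    using bij_mem by (auto simp: hom_def aut_grp_def BijGroup_def Bij_def compose_def comp_def)
qed

lemma orb_eq_orbit: "orb A x = orbit (aut_grp A) (\<lambda>f. f) x"
  by (auto simp: orb_def orbit_def aut_grp_def)

lemma orb_self: "x \<in> orb A x"
  using orbit_refl by (simp add: orb_eq_orbit)

lemma orb_eq_if_mem: "y \<in> orb A x \<Longrightarrow> orb A y = orb A x"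
  unfolding orb_eq_orbit using orbit_sym orbit_trans by blast

lemma card_orb_dvd: "finite A \<Longrightarrow> card (orb A x) dvd card A"
  using orbit_stabilizer_theorem[of x]
  by (metis UNIV_I dvd_triv_left orb_eq_orbit order_def partial_object.select_convs(1) aut_grp_def)

lemma funpow_card_eq_id: "finite A \<Longrightarrow> f \<in> A \<Longrightarrow> f ^^ card A = id"
proof -
  assume "finite A" "f \<in> A"
  have pow: "f [^]\<^bsub>aut_grp A\<^esub> n = f ^^ n" for n :: nat
    by (induct n) (simp_all add: aut_grp_def funpow_Suc_right funpow_swap1)
  have "f [^]\<^bsub>aut_grp A\<^esub> order (aut_grp A) = \<one>\<^bsub>aut_grp A\<^esub>"
    using group.pow_order_eq_1[OF group_aut_grp] \<open>f \<in> A\<close> by (simp add: aut_grp_def)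
  then show ?thesis
    unfolding pow by (simp add: order_def aut_grp_def)
qed

lemma orb_eq_singleton_iff: "orb A x = {x} \<longleftrightarrow> (\<forall>f\<in>A. f x = x)"
  using orb_self by (auto simp: orb_def)

lemma thin_part_iff_fixed: "h \<in> thin_part (orbitsV A) \<longleftrightarrow> (\<forall>f\<in>A. f h = h)"
proof -
  have "{h} \<in> range (orb A) \<longleftrightarrow> orb A h = {h}"
    using orb_self by (metis rangeE rangeI singletonD)
  then show ?thesis
    by (simp add: thin_part_def orbitsV_eq_range_orb orb_eq_singleton_iff)
qed

lemma subgrp_thin_part: "subgrp (thin_part (orbitsV A))"
  unfolding subgrp_def
proof (intro conjI ballI)
  show "0 \<in> thin_part (orbitsV A)"
    by (simp add: thin_part_iff_fixed map_zero)
  fix x y assume x: "x \<in> thin_part (orbitsV A)" and y: "y \<in> thin_part (orbitsV A)"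
  then show "x + y \<in> thin_part (orbitsV A)"
    by (auto simp: thin_part_iff_fixed additive)
  have "f (- x) = - x" if "f \<in> A" for f
    using that x map_diff[of f 0 x] map_zero[of f] by (simp add: thin_part_iff_fixed)
  then show "- x \<in> thin_part (orbitsV A)"
    by (simp add: thin_part_iff_fixed)
qed

lemma orb_translate_fixed:
  assumes "c \<in> thin_part (orbitsV A)"
  shows "orb A (c + x) = (+) c ` orb A x"
  unfolding orb_def image_image
  using assms by (intro image_cong) (simp_all add: additive thin_part_iff_fixed)

lemma orb_nsmul: "orb A (nsmul k x) = nsmul k ` orb A x"
  unfolding orb_def image_image by (intro image_cong) (simp_all add: map_nsmul)

lemma S_subgroup_mem_iff:
  assumes "S_subgroup (orbitsV A) U" and "f \<in> A"
  shows "f x \<in> U \<longleftrightarrow> x \<in> U"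
proof -
  have "orb A x \<subseteq> U \<or> orb A x \<inter> U = {}"
    using assms(1) orb_in_orbitsV[of A x] unfolding S_subgroup_def by blast
  moreover have "f x \<in> orb A x"
    using assms(2) by (simp add: orb_def)
  ultimately show ?thesis
    using orb_self by blast
qed

lemma S_subgroup_if_fixed:
  assumes "subgrp F" and "F \<subseteq> thin_part (orbitsV A)"
  shows "S_subgroup (orbitsV A) F"
  unfolding S_subgroup_def
proof (intro conjI ballI assms(1))
  fix T assume "T \<in> orbitsV A"
  then obtain x where T: "T = orb A x"
    by (auto simp: orbitsV_eq_range_orb)
  show "T \<subseteq> F \<or> T \<inter> F = {}"
  proof (rule disjCI)
    assume "T \<inter> F \<noteq> {}"
    then obtain z where "z \<in> orb A x" "z \<in> F"
      using T by blast
    then have "T = orb A z"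
      using T orb_eq_if_mem by simp
    also have "\<dots> = {z}"
      using \<open>z \<in> F\<close> assms(2) thin_part_iff_fixed orb_eq_singleton_iff by blast
    finally show "T \<subseteq> F"
      using \<open>z \<in> F\<close> by simp
  qed
qed

end

section \<open>Elementary abelian \<open>p\<close>-groups acted on by \<open>p\<close>-groups\<close>

locale elementary_p_aut_group = aut_group A
  for A :: "('a::{ab_group_add,finite} \<Rightarrow> 'a) set" +
  fixes p :: nat
  assumes prime_p: "prime p"
    and exponent_p: "\<And>x::'a. nsmul p x = 0"
    and card_A_prime_power: "\<exists>K. card A = p ^ K"
begin

lemma p_gt_1: "1 < p"
  using prime_p prime_gt_1_nat by blast

lemma card_orb_prime_power: "\<exists>j. card (orb A x) = p ^ j"
  using card_orb_dvd[of x] card_A_prime_power divides_primepow_nat[OF prime_p] by auto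

lemma card_orb_gt_1:
  assumes "x \<notin> thin_part (orbitsV A)"
  shows "1 < card (orb A x)"
proof -
  have "orb A x \<noteq> {x}"
    using assms by (simp add: thin_part_iff_fixed orb_eq_singleton_iff[symmetric])
  then have "\<not> card (orb A x) \<le> 1"
    using orb_self card_le_Suc0_iff_eq[of "orb A x"] by auto
  then show ?thesis
    by simp
qed

lemma card_orb_gt_imp_ge:
  assumes "p ^ n < card (orb A x)"
  shows "p ^ Suc n \<le> card (orb A x)"
proof -
  obtain j where j: "card (orb A x) = p ^ j"
    using card_orb_prime_power by blast
  then have "n < j"
    using assms p_gt_1 by (simp add: power_strict_increasing_iff)
  then show ?thesis
    using j p_gt_1 power_increasing[of "Suc n" j p] by simp
qed

lemma subgrp_cyclic: "subgrp (cyclic_subgrp (d::'a))"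
  using subgrp_cyclic_subgrp[of p d] p_gt_1 exponent_p by simp

lemma wreath_cyclic_subgrp:
  assumes E: "S_subgroup (orbitsV A) E" and d: "d \<in> thin_part (orbitsV A)" "d \<in> E"
    and rad: "\<And>T. T \<in> orbitsV A \<Longrightarrow> T \<subseteq> UNIV - E \<Longrightarrow> d \<in> rad T"
  shows "wreath (orbitsV A) E (cyclic_subgrp d)"
proof -
  have "S_subgroup (orbitsV A) (cyclic_subgrp d)"
    using S_subgroup_if_fixed subgrp_cyclic cyclic_subgrp_subset[OF subgrp_thin_part d(1)] by blast
  moreover have "cyclic_subgrp d \<subseteq> E"
    using E d(2) cyclic_subgrp_subset by (auto simp: S_subgroup_def)
  moreover have "cyclic_subgrp d \<subseteq> rad T" if "T \<in> orbitsV A" "T \<subseteq> UNIV - E" for T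
    using cyclic_subgrp_subset[OF subgrp_rad rad[OF that]] .
  ultimately show ?thesis
    using E unfolding wreath_def by blast
qed

end

locale index_p_subgroup = elementary_p_aut_group A p
  for A :: "('a::{ab_group_add,finite} \<Rightarrow> 'a) set" and p +
  fixes U :: "'a set"
  assumes S_subgroup_U: "S_subgroup (orbitsV A) U"
    and index_U: "p * card U = card (UNIV :: 'a set)"
begin

lemma subgrp_U: "subgrp U"
  using S_subgroup_U by (simp add: S_subgroup_def)

lemma coset_rep:
  assumes "x \<notin> U"
  obtains k where "k < p" and "y - nsmul k x \<in> U"
  using index_prime_coset_rep[OF prime_p exponent_p subgrp_U index_U assms] by blast

lemma card_coset: "card {y. y - x \<in> U} = card U"
proof -
  have "{y. y - x \<in> U} = (+) x ` U"
    by (auto simp: image_iff) (metis add.commute diff_add_cancel)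
  then show ?thesis
    by (simp add: card_image)
qed

text \<open>Writing \<open>f x = k x\<close> modulo \<open>U\<close>, the iterates give \<open>(f ^^ n) x = k\<^sup>n x\<close> modulo \<open>U\<close>;
  since \<open>f ^^ card A = id\<close> and \<open>card A\<close> is a power of \<open>p\<close>, Fermat's little theorem forces
  \<open>k = 1\<close>.\<close>
lemma map_diff_self_mem:
  assumes f: "f \<in> A"
  shows "f x - x \<in> U"
proof (cases "x \<in> U")
  case True
  then show ?thesis
    using S_subgroup_mem_iff[OF S_subgroup_U f] subgrp_diff[OF subgrp_U] by blast
next
  case False
  obtain k where k: "k < p" "f x - nsmul k x \<in> U"
    using coset_rep[OF False] by blast
  have iterate: "(f ^^ n) x - nsmul (k ^ n) x \<in> U" for n
  proof (induct n)
    case 0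
    then show ?case
      by (simp add: subgrp_0[OF subgrp_U])
  next
    case (Suc n)
    have "nsmul (k ^ Suc n) x = nsmul (k ^ n) (nsmul k x)"
      by (simp add: nsmul_mult[symmetric] mult.commute)
    then have "(f ^^ Suc n) x - nsmul (k ^ Suc n) x
        = f ((f ^^ n) x - nsmul (k ^ n) x) + nsmul (k ^ n) (f x - nsmul k x)"
      using f by (simp add: map_diff map_nsmul nsmul_diff_distrib)
    moreover have "f ((f ^^ n) x - nsmul (k ^ n) x) \<in> U"
      using Suc S_subgroup_mem_iff[OF S_subgroup_U f] by blast
    ultimately show ?case
      using subgrp_add[OF subgrp_U] subgrp_nsmul[OF subgrp_U k(2)] by simp
  qed
  obtain K where K: "card A = p ^ K"
    using card_A_prime_power by blast
  have "k ^ p ^ K mod p = k mod p"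
    using cong_pow_prime_power_self[OF prime_p] by (simp add: cong_def)
  then have "nsmul (k ^ card A) x = nsmul k x"
    using K nsmul_mod[OF exponent_p] by metis
  then have "nsmul 1 x - nsmul k x \<in> U"
    using iterate[of "card A"] funpow_card_eq_id[OF _ f] by simp
  then have "k = 1"
    using subgrp_nsmul_diff_imp_eq[OF prime_p exponent_p subgrp_U False p_gt_1 k(1)] by simp
  then show ?thesis
    using k(2) by simp
qed

lemma orb_subset_coset: "y \<in> orb A x \<Longrightarrow> y - x \<in> U"
  using map_diff_self_mem by (auto simp: orb_def)

text \<open>The \<open>p\<close> translates of \<open>orb A x\<close> by multiples of \<open>w\<close> are pairwise distinct orbits
  inside the coset of \<open>x\<close>, and together they are already as large as that coset.\<close>
lemma orbits_in_coset_are_translates: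
  assumes w: "w \<in> thin_part (orbitsV A)" "w \<in> U" "w \<notin> rad (orb A x)"
    and big: "card U \<le> p * card (orb A x)"
    and y: "y - x \<in> U"
  obtains i where "i < p" and "orb A y = (+) (nsmul i w) ` orb A x"
proof -
  define T where "T i = (+) (nsmul i w) ` orb A x" for i
  have T_orb: "T i = orb A (nsmul i w + x)" for i
    unfolding T_def using orb_translate_fixed subgrp_nsmul[OF subgrp_thin_part w(1)] by simp
  have T_coset: "T i \<subseteq> {y. y - x \<in> U}" for i
  proof
    fix z assume "z \<in> T i"
    then have "z - (nsmul i w + x) \<in> U"
      using orb_subset_coset T_orb by simp
    then have "z - (nsmul i w + x) + nsmul i w \<in> U"
      using subgrp_add[OF subgrp_U _ subgrp_nsmul[OF subgrp_U w(2)]] by blast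
    then show "z \<in> {y. y - x \<in> U}"
      by (simp add: algebra_simps)
  qed
  have T_disjoint: "T i \<inter> T j = {}" if "i < p" "j < p" "i \<noteq> j" for i j
  proof (rule ccontr)
    assume "T i \<inter> T j \<noteq> {}"
    then obtain z where "z \<in> T i" "z \<in> T j"
      by blast
    then have "T i = T j"
      unfolding T_orb by (metis orb_eq_if_mem)
    then show False
      using translates_nsmul_eq_imp_eq[OF prime_p exponent_p w(3) that(1,2)] that(3)
      by (simp add: T_def)
  qed
  have "card {y. y - x \<in> U} \<le> (\<Sum>i<p. card (T i))"
    using big card_coset by (simp add: T_def card_image)
  also have "\<dots> = card (\<Union>i<p. T i)"
    using T_disjoint by (intro card_UN_disjoint[symmetric]) simp_all
  finally have "(\<Union>i<p. T i) = {y. y - x \<in> U}"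
    using T_coset by (intro card_seteq) auto
  then obtain i where "i < p" "y \<in> T i"
    using y by blast
  moreover from this have "orb A y = T i"
    by (simp add: T_orb orb_eq_if_mem)
  ultimately show ?thesis
    using that by (simp add: T_def)
qed

text \<open>There are more fixed points than orbits in the coset of \<open>x\<close>, so two fixed points
  translate \<open>orb A x\<close> to the same orbit; their difference works.\<close>
lemma common_fixed_rad_in_coset:
  assumes w: "w \<in> thin_part (orbitsV A)" "w \<in> U" "w \<notin> rad (orb A x)"
    and big: "card U \<le> p * card (orb A x)"
    and thin: "p < card (thin_part (orbitsV A))" "thin_part (orbitsV A) \<subseteq> U"
  obtains d where "d \<in> thin_part (orbitsV A)" and "d \<noteq> 0"
    and "\<And>y. y - x \<in> U \<Longrightarrow> d \<in> rad (orb A y)"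
proof -
  let ?C = "thin_part (orbitsV A)"
  define tr where "tr c = (+) c ` orb A x" for c
  have "tr ` ?C \<subseteq> (\<lambda>i. (+) (nsmul i w) ` orb A x) ` {..<p}"
  proof
    fix Z assume "Z \<in> tr ` ?C"
    then obtain c where c: "c \<in> ?C" "Z = orb A (c + x)"
      by (auto simp: tr_def orb_translate_fixed)
    then have "c + x - x \<in> U"
      using thin(2) by auto
    then show "Z \<in> (\<lambda>i. (+) (nsmul i w) ` orb A x) ` {..<p}"
      using orbits_in_coset_are_translates[OF w big] c(2) by blast
  qed
  then have "card (tr ` ?C) \<le> card ((\<lambda>i. (+) (nsmul i w) ` orb A x) ` {..<p})"
    by (intro card_mono) simp_all
  also have "\<dots> \<le> p"
    using card_image_le[of "{..<p}"] by simp
  finally have "\<not> inj_on tr ?C"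
    using thin(1) card_image by fastforce
  then obtain c1 c2 where c: "c1 \<in> ?C" "c2 \<in> ?C" "c1 \<noteq> c2" "tr c1 = tr c2"
    unfolding inj_on_def by blast
  show ?thesis
  proof (rule that)
    show "c1 - c2 \<in> ?C"
      using subgrp_diff[OF subgrp_thin_part c(1,2)] .
    show "c1 - c2 \<noteq> 0"
      using c(3) by simp
    fix y assume "y - x \<in> U"
    then obtain i where "orb A y = (+) (nsmul i w) ` orb A x"
      using orbits_in_coset_are_translates[OF w big] by blast
    moreover have "c1 - c2 \<in> rad (orb A x)"
      using rad_translate_eq c(4) by (simp add: tr_def)
    ultimately show "c1 - c2 \<in> rad (orb A y)"
      by simp
  qed
qed

text \<open>Every coset of \<open>U\<close> other than \<open>U\<close> is a multiple of the coset of \<open>x\<close>, and scaling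
  by a unit maps orbits to orbits.\<close>
lemma rad_outside_from_coset:
  assumes "x \<notin> U" and d: "\<And>y. y - x \<in> U \<Longrightarrow> d \<in> rad (orb A y)"
    and T: "T \<in> orbitsV A" "T \<subseteq> UNIV - U"
  shows "d \<in> rad T"
proof -
  obtain y where y: "T = orb A y" "y \<notin> U"
    using T orb_self by (auto simp: orbitsV_eq_range_orb)
  obtain k where k: "k < p" "y - nsmul k x \<in> U"
    using coset_rep[OF assms(1)] by blast
  have "k \<noteq> 0"
  proof
    assume "k = 0"
    with k(2) y(2) show False
      by simp
  qed
  then have "\<not> p dvd k"
    using k(1) by (auto dest: dvd_imp_le)
  then obtain m where m: "\<forall>z::'a. nsmul m (nsmul k z) = z"
    using nsmul_inverse_mod_prime[OF prime_p _ exponent_p] by blast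
  have "nsmul m y - x = nsmul m (y - nsmul k x)"
    using m by (simp add: nsmul_diff_distrib)
  then have "nsmul m y - x \<in> U"
    using subgrp_nsmul[OF subgrp_U k(2)] by simp
  then have "nsmul m d \<in> rad (orb A (nsmul m y))"
    using subgrp_nsmul[OF subgrp_rad d] by blast
  then have "nsmul k (nsmul m d) \<in> rad (orb A (nsmul k (nsmul m y)))"
    using nsmul_in_rad_image by (simp add: orb_nsmul)
  then show ?thesis
    using m y(1) by (simp add: nsmul_commute[of k m])
qed

end

theorem lemma6p7:
  fixes p :: nat and A :: "('a::{ab_group_add,finite} \<Rightarrow> 'a) set" and U W :: "'a set"
  assumes "prime p" and "odd p"
    and "card (UNIV :: 'a set) = p ^ 5" and "\<forall>x::'a. nsmul p x = 0"
    and "aut_subgroup A" and "\<exists>k. card A = p ^ k"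
    and "card (fixpts A) \<ge> p ^ 2"
    and "indecomposable (orbitsV A)"
    and "S_subgroup (orbitsV A) U" and "S_subgroup (orbitsV A) W"
    and "W \<subset> thin_part (orbitsV A)" and "thin_part (orbitsV A) \<subset> U"
    and "card W = p" and "card U = p ^ 4"
  shows "\<exists>T\<in>orbitsV A. T \<subseteq> UNIV - U \<and> 1 < card T \<and> card T \<le> p ^ 2 \<and> \<not> W \<subseteq> rad T"
proof (rule ccontr)
  assume no_small: "\<not> ?thesis"
  interpret index_p_subgroup A p U
    using assms(1,3-6,9,14) by unfold_locales (simp_all add: power_Suc[symmetric])
  let ?C = "thin_part (orbitsV A)"
  have "U \<noteq> UNIV" and "W \<noteq> {0}"
    using assms(3,13,14) p_gt_1 by auto
  moreover have "W \<subseteq> U" and C_U: "?C \<subseteq> U" and C_big: "p < card ?C"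
    using assms(11-13) psubset_card_mono[OF finite assms(11)] by auto
  ultimately obtain T0 where T0: "T0 \<in> orbitsV A" "T0 \<subseteq> UNIV - U" "\<not> W \<subseteq> rad T0"
    using indecomposable_witness[OF assms(8-10)] by blast
  then obtain x where x: "T0 = orb A x" "x \<notin> U"
    using orb_self by (auto simp: orbitsV_eq_range_orb)
  then have "1 < card T0"
    using card_orb_gt_1 C_U by blast
  then have "p ^ 3 \<le> card T0"
    using no_small T0 x card_orb_gt_imp_ge[of 2 x] by fastforce
  then have big: "card U \<le> p * card (orb A x)"
    using assms(14) x(1) mult_le_mono2[of "p ^ 3" "card T0" p] by (simp add: power_Suc[symmetric])
  obtain w where w: "w \<in> ?C" "w \<in> U" "w \<notin> rad (orb A x)"
    using T0(3) x(1) assms(11) C_U by blast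
  obtain d where d: "d \<in> ?C" "d \<noteq> 0" "\<And>y. y - x \<in> U \<Longrightarrow> d \<in> rad (orb A y)"
    using common_fixed_rad_in_coset[OF w big C_big C_U] by blast
  have "wreath (orbitsV A) U (cyclic_subgrp d)"
    using wreath_cyclic_subgrp[OF S_subgroup_U d(1)] rad_outside_from_coset[OF x(2) d(3)] C_U d(1)
    by blast
  moreover have "cyclic_subgrp d \<noteq> {0}"
    using d(2) mem_cyclic_subgrp by blast
  ultimately show False
    using assms(8) \<open>U \<noteq> UNIV\<close> unfolding indecomposable_def by blast
qed

end
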